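(* Let $G$ be split reductive with root system of type $B_r$, $r\geqslant3$, with simple roots $\alpha_1,\dots,\alpha_r$ in Bourbaki labelling ($\alpha_r$ short), and let $\widetilde G$ be an $n$-fold Brylinski--Deligne cover associated with a Weyl-invariant quadratic form $Q$. Partition $\Phi_+=\Phi_{+,I}\sqcup\Phi_{+,II}\sqcup\Phi_{+,III}$ with $\Phi_{+,I}=\{\sum_{i\leqslant k\leqslant r}\alpha_k:1\leqslant i\leqslant r\}$, $\Phi_{+,II}=\{\sum_{i\leqslant k<j}\alpha_k:1\leqslant i<j\leqslant r\}$, $\Phi_{+,III}=\{\sum_{i\leqslant k<j}\alpha_k+2\sum_{j\leqslant k\leqslant r}\alpha_k:1\leqslant i<j\leqslant r\}$, and $\Phi_+^\vee=\Phi^\vee_{+,I}\sqcup\Phi^\vee_{+,II}\sqcup\Phi^\vee_{+,III}$ with $\Phi^\vee_{+,I}=\{\sum_{i\leqslant k<j}\alpha_k^\vee:1\leqslant i<j\leqslant r\}$, $\Phi^\vee_{+,II}=\{\sum_{i\leqslant k<j}\alpha_k^\vee+2\sum_{j\leqslant k<r}\alpha_k^\vee+\alpha_r^\vee:1\leqslant i<j\leqslant r\}$, $\Phi^\vee_{+,III}=\{2\sum_{i\leqslant k<r}\alpha_k^\vee+\alpha_r^\vee:1\leqslant i\leqslant r\}$. If $n_{\alpha_i}=2n_{\alpha_r}$ for all $1\leqslant i<r$, then $$f_X(\Phi^\vee_{+,I})=f_Y(\Phi_{+,II}),\quad f_X(\Phi^\vee_{+,II})=f_Y(\Phi_{+,III}),\quad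 f_X(\Phi^\vee_{+,III})=f_Y(\Phi_{+,I});$$ in particular $f_X(\Phi^\vee_+)=\frac{1}{2n_{\alpha_r}}[1,2r]=f_Y(\Phi_+)$. If $n_\alpha$ is constant on $\alpha\in\Delta$, then $f_X(\Phi^\vee_+)=\frac{1}{n_\alpha}[1,2r-1]=f_Y(\Phi_+)$.
   Context: $[a,b]$ denotes $\{a,a+1,\dots,b\}$. Notation: $\omega_\alpha$ fundamental weights, $\omega^\vee_\alpha$ fundamental coweights, $\rho^\vee=\sum_{\alpha\in\Delta}\omega_\alpha^\vee$. $B_Q(y,z)=Q(y+z)-Q(y)-Q(z)$, $Y_{Q,n}=\{y\in Y:B_Q(y,z)\in n\mathbf Z\ \forall z\in Y\}$, $n_\alpha=n/\gcd(n,Q(\alpha^\vee))$, and $\tilde n_\alpha\in\{n_\alpha,n_\alpha/2\}$ ($\alpha\in\Phi$) defined by $\mathbf Z\alpha^\vee\cap Y_{Q,n}=\mathbf Z\tilde n_\alpha\alpha^\vee$. $f_X:\Phi_+^\vee\to\mathbf Q$, $f_X(\beta^\vee)=\sum_{\alpha\in\Delta}\langle\omega_\alpha/\tilde n_\alpha,\beta^\vee\rangle$; $f_Y:\Phi_+\to\mathbf Q$, $f_Y(\beta)=\langle\rho^\vee,\beta\rangle/\tilde n_\beta$. *)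

theory Defs
  imports "HOL-Analysis.Finite_Cartesian_Product"
begin

text \<open>The cocharacter lattice Y is modelled as int^'m ('m a finite index type),
  the character lattice X = Hom(Y,Z) also as int^'m via the standard pairing.\<close>

definition pair :: "int^'m \<Rightarrow> int^'m \<Rightarrow> int" where
  "pair x y = (\<Sum>i\<in>UNIV. x$i * y$i)"

definition scl :: "int \<Rightarrow> int^'m \<Rightarrow> int^'m" where
  "scl k y = (\<chi> i. k * y$i)"

text \<open>Cartan integers <alpha_i, alpha_j^vee> of type B_r, Bourbaki labelling (alpha_r short).\<close>
definition cartanB :: "nat \<Rightarrow> nat \<Rightarrow> nat \<Rightarrow> int" where
  "cartanB r i j =
     (if i = j then 2
      else if j = i + 1 \<or> i = j + 1 then (if i + 1 = r \<and> j = r then -2 else -1)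
      else 0)"

definition srefl :: "(nat \<Rightarrow> int^'m) \<Rightarrow> (nat \<Rightarrow> int^'m) \<Rightarrow> nat \<Rightarrow> int^'m \<Rightarrow> int^'m" where
  "srefl a c i y = y - scl (pair (a i) y) (c i)"

definition BQ :: "(int^'m \<Rightarrow> int) \<Rightarrow> int^'m \<Rightarrow> int^'m \<Rightarrow> int" where
  "BQ Q y z = Q (y + z) - Q y - Q z"

definition is_quadratic_form :: "(int^'m \<Rightarrow> int) \<Rightarrow> bool" where
  "is_quadratic_form Q \<longleftrightarrow>
     (\<forall>y z w. BQ Q (y + z) w = BQ Q y w + BQ Q z w) \<and>
     (\<forall>k y. Q (scl k y) = k^2 * Q y)"

definition YQn :: "(int^'m \<Rightarrow> int) \<Rightarrow> int \<Rightarrow> (int^'m) set" where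
  "YQn Q n = {y. \<forall>z. n dvd BQ Q y z}"

definition nQ :: "(int^'m \<Rightarrow> int) \<Rightarrow> int \<Rightarrow> int^'m \<Rightarrow> int" where
  "nQ Q n y = n div gcd n (Q y)"

definition tnQ :: "(int^'m \<Rightarrow> int) \<Rightarrow> int \<Rightarrow> int^'m \<Rightarrow> int" where
  "tnQ Q n y = (THE m::int. m > 0 \<and>
      {scl k y | k. True} \<inter> YQn Q n = {scl (k * m) y | k. True})"

text \<open>Roots (resp. coroots) are encoded by their coefficient functions w.r.t. the simple
  roots alpha_1..alpha_r (resp. simple coroots), supported on {1..r}.\<close>

definition PhiI :: "nat \<Rightarrow> (nat \<Rightarrow> int) set" where
  "PhiI r = {(\<lambda>k. if i \<le> k \<and> k \<le> r then 1 else 0) | i. 1 \<le> i \<and> i \<le> r}"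
definition PhiII :: "nat \<Rightarrow> (nat \<Rightarrow> int) set" where
  "PhiII r = {(\<lambda>k. if i \<le> k \<and> k < j then 1 else 0) | i j. 1 \<le> i \<and> i < j \<and> j \<le> r}"
definition PhiIII :: "nat \<Rightarrow> (nat \<Rightarrow> int) set" where
  "PhiIII r = {(\<lambda>k. if i \<le> k \<and> k < j then 1 else if j \<le> k \<and> k \<le> r then 2 else 0)
                | i j. 1 \<le> i \<and> i < j \<and> j \<le> r}"
definition PhiPos :: "nat \<Rightarrow> (nat \<Rightarrow> int) set" where
  "PhiPos r = PhiI r \<union> PhiII r \<union> PhiIII r"

definition PhivI :: "nat \<Rightarrow> (nat \<Rightarrow> int) set" where
  "PhivI r = {(\<lambda>k. if i \<le> k \<and> k < j then 1 else 0) | i j. 1 \<le> i \<and> i < j \<and> j \<le> r}"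
definition PhivII :: "nat \<Rightarrow> (nat \<Rightarrow> int) set" where
  "PhivII r = {(\<lambda>k. if i \<le> k \<and> k < j then 1 else if j \<le> k \<and> k < r then 2
                   else if k = r then 1 else 0) | i j. 1 \<le> i \<and> i < j \<and> j \<le> r}"
definition PhivIII :: "nat \<Rightarrow> (nat \<Rightarrow> int) set" where
  "PhivIII r = {(\<lambda>k. if i \<le> k \<and> k < r then 2 else if k = r then 1 else 0) | i. 1 \<le> i \<and> i \<le> r}"
definition PhivPos :: "nat \<Rightarrow> (nat \<Rightarrow> int) set" where
  "PhivPos r = PhivI r \<union> PhivII r \<union> PhivIII r"

text \<open>W-invariant inner product on the root span of B_r: (alpha_i,alpha_i)=2 (i<r),
  (alpha_r,alpha_r)=1, (alpha_i,alpha_{i+1})=-1.\<close>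
definition ipB :: "nat \<Rightarrow> nat \<Rightarrow> nat \<Rightarrow> int" where
  "ipB r i j = (if i = j then (if i = r then 1 else 2)
               else if j = i + 1 \<or> i = j + 1 then -1 else 0)"

definition sqnormB :: "nat \<Rightarrow> (nat \<Rightarrow> int) \<Rightarrow> int" where
  "sqnormB r b = (\<Sum>i\<in>{1..r}. \<Sum>j\<in>{1..r}. b i * b j * ipB r i j)"

text \<open>Coefficients of beta^vee = 2 beta/(beta,beta) w.r.t. the simple coroots
  alpha_k^vee = 2 alpha_k/(alpha_k,alpha_k).\<close>
definition coroot_coeff :: "nat \<Rightarrow> (nat \<Rightarrow> int) \<Rightarrow> nat \<Rightarrow> int" where
  "coroot_coeff r b k = (b k * ipB r k k) div sqnormB r b"

definition cvec :: "nat \<Rightarrow> (nat \<Rightarrow> int^'m) \<Rightarrow> (nat \<Rightarrow> int) \<Rightarrow> int^'m" where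
  "cvec r c d = (\<Sum>k\<in>{1..r}. scl (d k) (c k))"

text \<open>f_X(beta^vee) = sum_alpha <omega_alpha, beta^vee>/tilde n_alpha; <omega_{alpha_k},beta^vee>
  is the alpha_k^vee-coefficient d k of beta^vee.\<close>
definition fX :: "nat \<Rightarrow> (nat \<Rightarrow> int^'m) \<Rightarrow> (int^'m \<Rightarrow> int) \<Rightarrow> int \<Rightarrow> (nat \<Rightarrow> int) \<Rightarrow> rat" where
  "fX r c Q n d = (\<Sum>k\<in>{1..r}. of_int (d k) / of_int (tnQ Q n (c k)))"

text \<open>f_Y(beta) = <rho^vee, beta>/tilde n_beta, with <rho^vee,beta> the height of beta.\<close>
definition fY :: "nat \<Rightarrow> (nat \<Rightarrow> int^'m) \<Rightarrow> (int^'m \<Rightarrow> int) \<Rightarrow> int \<Rightarrow> (nat \<Rightarrow> int) \<Rightarrow> rat" where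
  "fY r c Q n b = of_int (\<Sum>k\<in>{1..r}. b k) / of_int (tnQ Q n (cvec r c (coroot_coeff r b)))"

end

theory Submission
  imports Defs
begin

text \<open>Invariance of \<open>Q\<close> under the simple reflection \<open>s\<^sub>i\<close> gives
  \<open>B\<^sub>Q(\<alpha>\<^sub>i\<^sup>\<vee>, y) = Q(\<alpha>\<^sub>i\<^sup>\<vee>) \<langle>\<alpha>\<^sub>i, y\<rangle>\<close>. Comparing both sides for adjacent simple
  coroots shows that \<open>Q\<close> takes one value \<open>q\<close> on \<open>\<alpha>\<^sub>1\<^sup>\<vee>, \<dots>, \<alpha>\<^sub>r\<^sub>-\<^sub>1\<^sup>\<vee>\<close> and the
  value \<open>2q\<close> on \<open>\<alpha>\<^sub>r\<^sup>\<vee>\<close>. Hence for a coroot \<open>\<beta>\<^sup>\<vee> = \<Sum> d\<^sub>k \<alpha>\<^sub>k\<^sup>\<vee>\<close> every value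
  \<open>B\<^sub>Q(\<beta>\<^sup>\<vee>, y)\<close> is divisible by \<open>Q(\<beta>\<^sup>\<vee>)\<close> (which is \<open>q\<close> or \<open>2q\<close>), and
  \<open>B\<^sub>Q(\<beta>\<^sup>\<vee>, \<alpha>\<^sub>w\<^sup>\<vee>) = \<plusminus>Q(\<beta>\<^sup>\<vee>)\<close> for a suitable simple root \<open>\<alpha>\<^sub>w\<close>; so
  \<open>\<tilde>n\<^sub>\<beta> = n / gcd(n, Q(\<beta>\<^sup>\<vee>))\<close>, which is \<open>n\<^sub>\<alpha>\<^sub>1\<close> for long and \<open>n\<^sub>\<alpha>\<^sub>r\<close> for short
  roots \<open>\<beta>\<close>. Then \<open>f\<^sub>X\<close> and \<open>f\<^sub>Y\<close> are explicit affine functions of the indices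
  \<open>i, j\<close> of the three families; as \<open>j - i\<close> and \<open>i + j\<close> run through intervals, under either
  hypothesis the value sets match up and fill the stated intervals.\<close>

section \<open>Quadratic forms and the generator \<open>\<tilde>n\<close>\<close>

lemma dvd_mult_iff_div_gcd_dvd:
  fixes n t k :: int
  assumes "n > 0"
  shows "n dvd k * t \<longleftrightarrow> n div gcd n t dvd k"
proof -
  define g where "g = gcd n t"
  have "g > 0" using assms by (simp add: g_def)
  obtain m where m: "n = g * m" using g_def by (metis gcd_dvd1 dvdE)
  obtain t' where t': "t = g * t'" using g_def by (metis gcd_dvd2 dvdE)
  have "n div g = m" using m \<open>g > 0\<close> by simp
  moreover have "t div g = t'" using t' \<open>g > 0\<close> by simp
  ultimately have "coprime m t'"
    using div_gcd_coprime[of n t] assms unfolding g_def by auto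
  have "n dvd k * t \<longleftrightarrow> g * m dvd g * (k * t')" by (simp add: m t' algebra_simps)
  also have "\<dots> \<longleftrightarrow> m dvd k" using \<open>g > 0\<close> \<open>coprime m t'\<close> by (simp add: coprime_dvd_mult_left_iff)
  finally show ?thesis using \<open>n div g = m\<close> by (simp add: g_def)
qed

lemma nQ_pos: "n > 0 \<Longrightarrow> nQ Q n y > 0"
  by (simp add: nQ_def pos_imp_zdiv_pos_iff zdvd_imp_le)

lemma pair_add_right: "pair x (y + z) = pair x y + pair x z"
  by (simp add: pair_def sum.distrib algebra_simps)

lemma pair_scl_right: "pair x (scl k y) = k * pair x y"
  by (simp add: pair_def scl_def sum_distrib_left algebra_simps)

lemma pair_zero_right: "pair x 0 = 0"
  by (simp add: pair_def)

lemma pair_sum_right: "pair x (sum f S) = (\<Sum>k\<in>S. pair x (f k))"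
  by (simp add: pair_def sum_distrib_left sum.swap[of _ S] algebra_simps)

lemma scl_add_left: "scl (k + l) y = scl k y + scl l y"
  by (simp add: scl_def vec_eq_iff algebra_simps)

lemma scl_zero_left [simp]: "scl 0 y = 0"
  by (simp add: scl_def vec_eq_iff)

lemma scl_one [simp]: "scl 1 y = y"
  by (simp add: scl_def vec_eq_iff)

lemma BQ_commute: "BQ Q y z = BQ Q z y"
  by (simp add: BQ_def algebra_simps)

context
  fixes Q :: "int^'m \<Rightarrow> int"
  assumes quad: "is_quadratic_form Q"
begin

lemma BQ_add_left: "BQ Q (y + z) w = BQ Q y w + BQ Q z w"
  using quad by (simp add: is_quadratic_form_def)

lemma Q_scl: "Q (scl k y) = k\<^sup>2 * Q y"
  using quad by (simp add: is_quadratic_form_def)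

lemma BQ_zero_left [simp]: "BQ Q 0 w = 0"
  using BQ_add_left[of 0 0 w] by simp

lemma BQ_scl_left: "BQ Q (scl k y) w = k * BQ Q y w"
proof (induction k rule: int_induct[of _ 0])
  case (step1 i)
  then show ?case by (simp add: scl_add_left BQ_add_left algebra_simps)
next
  case (step2 i)
  have "BQ Q (scl i y) w = BQ Q (scl (i - 1) y) w + BQ Q y w"
    using BQ_add_left[of "scl (i - 1) y" y w] scl_add_left[of "i - 1" 1 y] by simp
  with step2 show ?case by (simp add: algebra_simps)
qed simp

lemma BQ_scl_right: "BQ Q w (scl k y) = k * BQ Q w y"
  using BQ_scl_left BQ_commute by metis

lemma BQ_sum_left: "finite S \<Longrightarrow> BQ Q (sum f S) w = (\<Sum>k\<in>S. BQ Q (f k) w)"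
  by (induction S rule: finite_induct) (simp_all add: BQ_add_left)

lemma BQ_self: "BQ Q y y = 2 * Q y"
  using Q_scl[of 2 y] scl_add_left[of 1 1 y] by (simp add: BQ_def)

lemma Q_diff: "Q (y - x) = Q y + Q x - BQ Q y x"
  using BQ_add_left[of "y - x" x x] BQ_self[of x] unfolding BQ_def by simp

end

lemma scl_cancel_right: "v \<noteq> 0 \<Longrightarrow> scl k v = scl l v \<Longrightarrow> k = l"
  by (metis mult_cancel_right scl_def vec_eq_iff vec_lambda_beta zero_index)

lemma scl_mem_YQn_iff:
  fixes Q :: "int^'m \<Rightarrow> int"
  assumes quad: "is_quadratic_form Q" and "n > 0"
    and dvd_BQ: "\<And>z. t dvd BQ Q v z" and BQ_dvd: "BQ Q v z\<^sub>0 dvd t"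
  shows "scl k v \<in> YQn Q n \<longleftrightarrow> n div gcd n t dvd k"
proof -
  have "scl k v \<in> YQn Q n \<longleftrightarrow> (\<forall>z. n dvd k * BQ Q v z)"
    by (simp add: YQn_def BQ_scl_left[OF quad])
  also have "\<dots> \<longleftrightarrow> n dvd k * t"
  proof
    assume "\<forall>z. n dvd k * BQ Q v z"
    then have "n dvd k * BQ Q v z\<^sub>0" ..
    moreover have "k * BQ Q v z\<^sub>0 dvd k * t" using BQ_dvd by (rule mult_dvd_mono[OF dvd_refl])
    ultimately show "n dvd k * t" by (rule dvd_trans)
  next
    assume "n dvd k * t"
    moreover have "k * t dvd k * BQ Q v z" for z using dvd_BQ by (rule mult_dvd_mono[OF dvd_refl])
    ultimately show "\<forall>z. n dvd k * BQ Q v z" using dvd_trans by blast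
  qed
  also have "\<dots> \<longleftrightarrow> n div gcd n t dvd k"
    using \<open>n > 0\<close> by (rule dvd_mult_iff_div_gcd_dvd)
  finally show ?thesis .
qed

lemma tnQ_eq_div_gcd:
  fixes Q :: "int^'m \<Rightarrow> int"
  assumes quad: "is_quadratic_form Q" and "n > 0" and "v \<noteq> 0"
    and dvd_BQ: "\<And>z. t dvd BQ Q v z" and BQ_dvd: "BQ Q v z\<^sub>0 dvd t"
  shows "tnQ Q n v = n div gcd n t"
proof -
  define m where "m = n div gcd n t"
  have "m > 0" using \<open>n > 0\<close> by (simp add: m_def pos_imp_zdiv_pos_iff zdvd_imp_le)
  have mem: "scl k v \<in> YQn Q n \<longleftrightarrow> m dvd k" for k
    unfolding m_def using quad \<open>n > 0\<close> dvd_BQ BQ_dvd by (rule scl_mem_YQn_iff)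
  have generator_iff: "{scl k v | k. True} \<inter> YQn Q n = {scl (k * m') v | k. True} \<longleftrightarrow> m' = m"
    if "m' > 0" for m'
  proof
    assume gen: "{scl k v | k. True} \<inter> YQn Q n = {scl (k * m') v | k. True}"
    have "scl (1 * m') v \<in> YQn Q n" using gen by blast
    then have "m dvd m'" using mem by simp
    have "scl m v \<in> YQn Q n" by (simp add: mem)
    then have "scl m v \<in> {scl k v | k. True} \<inter> YQn Q n" by blast
    then obtain k where "scl m v = scl (k * m') v" using gen by blast
    then have "m' dvd m" using scl_cancel_right[OF \<open>v \<noteq> 0\<close>] by (metis dvd_triv_right)
    show "m' = m" using \<open>m dvd m'\<close> \<open>m' dvd m\<close> \<open>m > 0\<close> that by (simp add: zdvd_antisym_nonneg)
  next
    assume "m' = m"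
    then show "{scl k v | k. True} \<inter> YQn Q n = {scl (k * m') v | k. True}"
      using mem by (auto simp: dvd_def mult.commute)
  qed
  have "tnQ Q n v = m"
    unfolding tnQ_def using generator_iff \<open>m > 0\<close> by (intro the_equality) auto
  then show ?thesis by (simp add: m_def)
qed

section \<open>Root system of type \<open>B\<^sub>r\<close> with a Weyl-invariant quadratic form\<close>

lemma cartanB_row_sum:
  assumes "1 \<le> w" "w \<le> r"
  shows "(\<Sum>k\<in>{1..r}. d k * cartanB r w k) =
    2 * d w - (if w \<ge> 2 then d (w - 1) else 0)
      - (if w < r then (if w + 1 = r then 2 else 1) * d (w + 1) else 0)"
proof -
  have "d k * cartanB r w k = (if k = w then 2 * d w else 0)
     + (if k = w + 1 then - (if w + 1 = r then 2 else 1) * d (w + 1) else 0)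
     + (if k = w - 1 then - d (w - 1) else 0)" for k
    using assms by (auto simp: cartanB_def)
  moreover have "(w + 1 \<in> {1..r}) = (w < r)" "(w - 1 \<in> {1..r}) = (2 \<le> w)" "w \<in> {1..r}"
    using assms by auto
  ultimately show ?thesis by (simp add: sum.distrib)
qed

locale type_B_cover =
  fixes r :: nat and n :: int and a c :: "nat \<Rightarrow> int^'m" and Q :: "int^'m \<Rightarrow> int"
  assumes r3: "r \<ge> 3"
    and npos: "n \<ge> 1"
    and cartan: "\<forall>i\<in>{1..r}. \<forall>j\<in>{1..r}. pair (a i) (c j) = cartanB r i j"
    and quad: "is_quadratic_form Q"
    and winv: "\<forall>i\<in>{1..r}. \<forall>y. Q (srefl a c i y) = Q y"
begin

text \<open>\<open>n_long\<close> and \<open>n_short\<close> are \<open>n\<^sub>\<alpha>\<close> for the long simple roots \<open>\<alpha>\<^sub>1, \<dots>, \<alpha>\<^sub>r\<^sub>-\<^sub>1\<close> and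
  the short simple root \<open>\<alpha>\<^sub>r\<close>; their coroots are respectively short and long.\<close>

abbreviation n_long :: int where "n_long \<equiv> nQ Q n (c 1)"
abbreviation n_short :: int where "n_short \<equiv> nQ Q n (c r)"

lemma pairing_mult_BQ_simple_coroot:
  assumes "i \<in> {1..r}"
  shows "pair (a i) z * BQ Q (c i) z = (pair (a i) z)\<^sup>2 * Q (c i)"
proof -
  define p where "p = pair (a i) z"
  have "Q z = Q (z - scl p (c i))" using winv assms by (simp add: srefl_def p_def)
  also have "\<dots> = Q z + p\<^sup>2 * Q (c i) - p * BQ Q (c i) z"
    by (simp add: Q_diff[OF quad] Q_scl[OF quad] BQ_scl_right[OF quad] BQ_commute[of Q z])
  finally have "p * BQ Q (c i) z = p\<^sup>2 * Q (c i)" by linarith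
  then show ?thesis unfolding p_def .
qed

lemma BQ_simple_coroot:
  assumes i: "i \<in> {1..r}"
  shows "BQ Q (c i) z = Q (c i) * pair (a i) z"
proof (cases "pair (a i) z = 0")
  case True
  txt \<open>The previous lemma says nothing here; shifting \<open>z\<close> by \<open>c i\<close> makes the pairing 2.\<close>
  have "pair (a i) (z + c i) = 2" using True cartan i by (simp add: pair_add_right cartanB_def)
  then have "BQ Q (c i) (z + c i) = 2 * Q (c i)"
    using pairing_mult_BQ_simple_coroot[OF i, of "z + c i"] by simp
  moreover have "BQ Q (c i) (z + c i) = BQ Q (c i) z + 2 * Q (c i)"
    by (simp add: BQ_commute[of Q "c i"] BQ_add_left[OF quad] BQ_self[OF quad])
  ultimately show ?thesis using True by simp
next
  case False
  then show ?thesis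
    using pairing_mult_BQ_simple_coroot[OF i, of z] by (simp add: power2_eq_square)
qed

lemma Q_simple_coroot_adjacent:
  assumes "1 \<le> k" "k < r"
  shows "Q (c k) * cartanB r k (k + 1) = Q (c (k + 1)) * cartanB r (k + 1) k"
proof -
  have "BQ Q (c k) (c (k + 1)) = BQ Q (c (k + 1)) (c k)" by (rule BQ_commute)
  then show ?thesis using BQ_simple_coroot[of k] BQ_simple_coroot[of "k + 1"] cartan assms by simp
qed

text \<open>A constant rather than an abbreviation for \<open>Q (c 1)\<close>, so that the next lemma is a
  terminating rewrite rule.\<close>

definition q :: int where "q = Q (c 1)"

lemma Q_simple_coroot:
  assumes "k \<in> {1..r}"
  shows "Q (c k) = (if k = r then 2 else 1) * q"
proof -
  have long: "Q (c k) = Q (c 1)" if "1 \<le> k" "k < r" for k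
    using that
  proof (induction k)
    case (Suc k)
    show ?case
    proof (cases "k = 0")
      case False
      then have "Q (c k) = Q (c (k + 1))"
        using Q_simple_coroot_adjacent[of k] Suc.prems by (simp add: cartanB_def)
      with Suc False show ?thesis by simp
    qed simp
  qed simp
  define s where "s = r - 1"
  have r: "r = s + 1" "s \<ge> 2" using r3 by (simp_all add: s_def)
  then have "Q (c s) * 2 = Q (c r)"
    using Q_simple_coroot_adjacent[of s] by (simp add: cartanB_def)
  then show ?thesis using long[of k] long[of s] assms r by (auto simp: q_def)
qed

lemma n_long_eq: "n_long = n div gcd n q"
  by (simp add: nQ_def q_def)

lemma n_short_eq: "n_short = n div gcd n (2 * q)"
  using Q_simple_coroot[of r] r3 by (simp add: nQ_def)

lemma n_pos: "n > 0"
  using npos by simp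

lemma n_short_pos: "n_short > 0" and n_long_pos: "n_long > 0"
  using nQ_pos[OF n_pos] by blast+

lemma BQ_cvec: "BQ Q (cvec r c d) z = (\<Sum>k\<in>{1..r}. d k * Q (c k) * pair (a k) z)"
  unfolding cvec_def BQ_sum_left[OF quad finite_atLeastAtMost]
  by (intro sum.cong) (simp_all add: BQ_scl_left[OF quad] BQ_simple_coroot)

lemma pair_cvec:
  "w \<in> {1..r} \<Longrightarrow> pair (a w) (cvec r c d) = (\<Sum>k\<in>{1..r}. d k * cartanB r w k)"
  unfolding cvec_def pair_sum_right pair_scl_right using cartan by simp

lemma cvec_delta: "i \<in> {1..r} \<Longrightarrow> cvec r c (\<lambda>k. if k = i then 1 else 0) = c i"
  unfolding cvec_def by (simp add: if_distrib[of "\<lambda>x. scl x _"] cong: if_cong)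

lemma tnQ_cvec:
  assumes "\<forall>k\<in>{1..r}. t dvd d k * Q (c k)" and w: "w \<in> {1..r}"
    and "Q (c w) * pair (a w) (cvec r c d) dvd t" and "pair (a w) (cvec r c d) \<noteq> 0"
  shows "tnQ Q n (cvec r c d) = n div gcd n t"
proof (rule tnQ_eq_div_gcd[OF quad n_pos])
  show "cvec r c d \<noteq> 0" using assms(4) by (auto simp: pair_zero_right)
  show "t dvd BQ Q (cvec r c d) z" for z
    unfolding BQ_cvec using assms(1) by (intro dvd_sum) (simp add: dvd_mult2)
  have "BQ Q (cvec r c d) (c w) = Q (c w) * pair (a w) (cvec r c d)"
    using BQ_simple_coroot[OF w] BQ_commute by metis
  then show "BQ Q (cvec r c d) (c w) dvd t" using assms(3) by simp
qed

lemma tnQ_cvec_short_coroot: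
  assumes w: "w \<in> {1..<r}" and pairing: "pair (a w) (cvec r c d) \<in> {1, -1}"
  shows "tnQ Q n (cvec r c d) = n_long"
  unfolding n_long_eq
proof (rule tnQ_cvec)
  show "\<forall>k\<in>{1..r}. q dvd d k * Q (c k)" by (simp add: Q_simple_coroot)
  show "w \<in> {1..r}" using w by simp
  then show "Q (c w) * pair (a w) (cvec r c d) dvd q" using w pairing by (auto simp: Q_simple_coroot)
  show "pair (a w) (cvec r c d) \<noteq> 0" using pairing by auto
qed

lemma tnQ_cvec_long_coroot:
  assumes even: "\<forall>k\<in>{1..<r}. even (d k)"
    and w: "w \<in> {1..<r}" and pairing: "pair (a w) (cvec r c d) \<in> {2, -2}"
  shows "tnQ Q n (cvec r c d) = n_short"
  unfolding n_short_eq
proof (rule tnQ_cvec)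
  show "\<forall>k\<in>{1..r}. 2 * q dvd d k * Q (c k)"
    using even by (auto simp: Q_simple_coroot mult.commute[of 2] mult_dvd_mono)
  show "w \<in> {1..r}" using w by simp
  then show "Q (c w) * pair (a w) (cvec r c d) dvd 2 * q" using w pairing by (auto simp: Q_simple_coroot)
  show "pair (a w) (cvec r c d) \<noteq> 0" using pairing by auto
qed

lemma tnQ_simple_coroot_short: "tnQ Q n (c r) = n_short"
proof -
  have "r \<in> {1..r}" "pair (a (r - 1)) (c r) = -2" using cartan r3 by (simp_all add: cartanB_def)
  then have "tnQ Q n (cvec r c (\<lambda>j. if j = r then 1 else 0)) = n_short"
    using r3 by (intro tnQ_cvec_long_coroot[of _ "r - 1"]) (simp_all add: cvec_delta)
  then show ?thesis using \<open>r \<in> {1..r}\<close> by (simp add: cvec_delta)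
qed

lemma tnQ_simple_coroot_long:
  assumes k: "k \<in> {1..<r}"
  shows "tnQ Q n (c k) = n_long"
proof -
  obtain w where w: "w \<in> {1..<r}" "k = w + 1 \<or> w = k + 1"
  proof (cases "k \<ge> 2")
    case True
    then show thesis using k by (intro that[of "k - 1"]) auto
  next
    case False
    then show thesis using k r3 by (intro that[of 2]) auto
  qed
  then have "pair (a w) (c k) = -1" using k cartan by (auto simp: cartanB_def)
  then have "tnQ Q n (cvec r c (\<lambda>j. if j = k then 1 else 0)) = n_long"
    using k w by (intro tnQ_cvec_short_coroot[of w]) (simp_all add: cvec_delta)
  then show ?thesis using k by (simp add: cvec_delta)
qed

lemma fX_eq:
  "fX r c Q n d = of_int (\<Sum>k\<in>{1..<r}. d k) / of_int n_long + of_int (d r) / of_int n_short"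
proof -
  have "fX r c Q n d = (\<Sum>k\<in>{1..<r}. of_int (d k) / of_int (tnQ Q n (c k)))
      + of_int (d r) / of_int (tnQ Q n (c r))"
    unfolding fX_def atLeastLessThanSuc_atLeastAtMost[symmetric] using r3
    by (simp add: sum.atLeastLessThan_Suc)
  also have "\<dots> = (\<Sum>k\<in>{1..<r}. of_int (d k) / of_int n_long) + of_int (d r) / of_int n_short"
    using r3 by (simp add: tnQ_simple_coroot_short tnQ_simple_coroot_long)
  finally show ?thesis by (simp add: sum_divide_distrib)
qed

end

section \<open>The three families of positive roots and coroots\<close>

text \<open>Coefficient vectors with respect to the simple (co)roots: \<open>segment i j\<close> is that of
  \<open>\<Sum>\<^sub>i\<^sub>\<le>\<^sub>k\<^sub><\<^sub>j \<alpha>\<^sub>k\<close>, the coefficients of both type-I coroots and type-II roots.\<close>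

definition segment :: "nat \<Rightarrow> nat \<Rightarrow> nat \<Rightarrow> int" where
  "segment i j k = (if i \<le> k \<and> k < j then 1 else 0)"

definition corootII :: "nat \<Rightarrow> nat \<Rightarrow> nat \<Rightarrow> nat \<Rightarrow> int" where
  "corootII r i j k = segment i j k + 2 * segment j r k + segment r (Suc r) k"

definition corootIII :: "nat \<Rightarrow> nat \<Rightarrow> nat \<Rightarrow> int" where
  "corootIII r i k = 2 * segment i r k + segment r (Suc r) k"

definition rootI :: "nat \<Rightarrow> nat \<Rightarrow> nat \<Rightarrow> int" where
  "rootI r i k = segment i (Suc r) k"

definition rootIII :: "nat \<Rightarrow> nat \<Rightarrow> nat \<Rightarrow> nat \<Rightarrow> int" where
  "rootIII r i j k = segment i j k + 2 * segment j (Suc r) k"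

definition index_pairs :: "nat \<Rightarrow> (nat \<times> nat) set" where
  "index_pairs r = {(i, j). 1 \<le> i \<and> i < j \<and> j \<le> r}"

lemma sum_segment: "(\<Sum>k\<in>{a..<b}. segment i j k) = int (min j b - max i a)"
proof -
  have "{k \<in> {a..<b}. i \<le> k \<and> k < j} = {max i a..<min j b}" by auto
  then show ?thesis unfolding segment_def by (simp add: sum.inter_filter[symmetric])
qed

lemma sum_segment_atLeastAtMost: "(\<Sum>k\<in>{a..b}. segment i j k) = int (min j (Suc b) - max i a)"
  using sum_segment[where b = "Suc b"] by (simp add: atLeastLessThanSuc_atLeastAtMost)

lemma setcompr_eq_image_pairs:
  assumes "\<And>i j. P i j \<Longrightarrow> f i j = g i j"
  shows "{f i j | i j. P i j} = (\<lambda>(i, j). g i j) ` {(i, j). P i j}"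
  using assms by (auto simp: image_def) metis

lemma setcompr_eq_image:
  assumes "\<And>i. i \<in> A \<Longrightarrow> f i = g i"
  shows "{f i | i. i \<in> A} = g ` A"
  using assms by (auto simp: image_def) metis

lemma PhivI_eq: "PhivI r = (\<lambda>(i, j). segment i j) ` index_pairs r"
  unfolding PhivI_def index_pairs_def
  by (rule setcompr_eq_image_pairs) (simp add: fun_eq_iff segment_def)

lemma PhiII_eq: "PhiII r = (\<lambda>(i, j). segment i j) ` index_pairs r"
  unfolding PhiII_def index_pairs_def
  by (rule setcompr_eq_image_pairs) (simp add: fun_eq_iff segment_def)

lemma PhivII_eq: "PhivII r = (\<lambda>(i, j). corootII r i j) ` index_pairs r"
  unfolding PhivII_def index_pairs_def
  by (rule setcompr_eq_image_pairs) (auto simp: fun_eq_iff corootII_def segment_def)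

lemma PhiIII_eq: "PhiIII r = (\<lambda>(i, j). rootIII r i j) ` index_pairs r"
  unfolding PhiIII_def index_pairs_def
  by (rule setcompr_eq_image_pairs) (auto simp: fun_eq_iff rootIII_def segment_def)

lemma PhivIII_eq: "PhivIII r = corootIII r ` {1..r}"
  unfolding PhivIII_def atLeastAtMost_iff[symmetric]
  by (rule setcompr_eq_image) (auto simp: fun_eq_iff corootIII_def segment_def)

lemma PhiI_eq: "PhiI r = rootI r ` {1..r}"
  unfolding PhiI_def atLeastAtMost_iff[symmetric]
  by (rule setcompr_eq_image) (auto simp: fun_eq_iff rootI_def segment_def)

lemma image_index_pairs_diff: "(\<lambda>(i, j). int j - int i) ` index_pairs r = {1..int r - 1}"
proof
  show "(\<lambda>(i, j). int j - int i) ` index_pairs r \<subseteq> {1..int r - 1}"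
    by (auto simp: index_pairs_def)
  show "{1..int r - 1} \<subseteq> (\<lambda>(i, j). int j - int i) ` index_pairs r"
  proof
    fix s assume "s \<in> {1..int r - 1}"
    then show "s \<in> (\<lambda>(i, j). int j - int i) ` index_pairs r"
      by (intro image_eqI[of _ _ "(1, nat s + 1)"]) (auto simp: index_pairs_def)
  qed
qed

lemma image_index_pairs_sum: "(\<lambda>(i, j). int i + int j) ` index_pairs r = {3..2 * int r - 1}"
proof
  show "(\<lambda>(i, j). int i + int j) ` index_pairs r \<subseteq> {3..2 * int r - 1}"
    by (auto simp: index_pairs_def)
  show "{3..2 * int r - 1} \<subseteq> (\<lambda>(i, j). int i + int j) ` index_pairs r"
  proof
    fix s assume s: "s \<in> {3..2 * int r - 1}"
    show "s \<in> (\<lambda>(i, j). int i + int j) ` index_pairs r"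
    proof (cases "s \<le> int r + 1")
      case True
      then show ?thesis
        using s by (intro image_eqI[of _ _ "(1, nat s - 1)"]) (auto simp: index_pairs_def)
    next
      case False
      then show ?thesis
        using s by (intro image_eqI[of _ _ "(nat s - r, r)"]) (auto simp: index_pairs_def)
    qed
  qed
qed

lemma Un_atLeastAtMost_int_top:
  fixes a b :: int
  assumes "E \<subseteq> {a..b}" and "b \<in> E"
  shows "E \<union> {a..b - 1} = {a..b}"
  using assms by force

lemma sqnormB_eq_sum_row:
  "sqnormB r b = (\<Sum>i\<in>{1..r}. b i * ((if i = r then 1 else 2) * b i
      - (if i < r then b (i + 1) else 0) - (if i \<ge> 2 then b (i - 1) else 0)))"
  unfolding sqnormB_def
proof (intro sum.cong refl)
  fix i assume i: "i \<in> {1..r}"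
  have "b j * ipB r i j = (if j = i then (if i = r then 1 else 2) * b i else 0)
     + (if j = i + 1 then - b (i + 1) else 0) + (if j = i - 1 then - b (i - 1) else 0)" for j
    using i by (auto simp: ipB_def)
  moreover have "(i + 1 \<in> {1..r}) = (i < r)" "(i - 1 \<in> {1..r}) = (2 \<le> i)" using i by auto
  ultimately have "(\<Sum>j\<in>{1..r}. b j * ipB r i j) = (if i = r then 1 else 2) * b i
      - (if i < r then b (i + 1) else 0) - (if i \<ge> 2 then b (i - 1) else 0)"
    using i by (simp add: sum.distrib)
  moreover have "(\<Sum>j\<in>{1..r}. b i * b j * ipB r i j) = b i * (\<Sum>j\<in>{1..r}. b j * ipB r i j)"
    by (simp add: sum_distrib_left mult.assoc)
  ultimately show "(\<Sum>j\<in>{1..r}. b i * b j * ipB r i j) = b i * ((if i = r then 1 else 2) * b i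
      - (if i < r then b (i + 1) else 0) - (if i \<ge> 2 then b (i - 1) else 0))"
    by simp
qed

text \<open>In the orthonormal coordinates \<open>\<epsilon>\<^sub>k\<close> with \<open>\<alpha>\<^sub>k = \<epsilon>\<^sub>k - \<epsilon>\<^sub>k\<^sub>+\<^sub>1\<close> and \<open>\<alpha>\<^sub>r = \<epsilon>\<^sub>r\<close>, the root
  \<open>\<Sum> b\<^sub>k \<alpha>\<^sub>k\<close> has \<open>\<epsilon>\<^sub>k\<close>-coordinate \<open>b\<^sub>k - b\<^sub>k\<^sub>-\<^sub>1\<close>.\<close>

lemma sqnormB_eq_sum_diff_squares:
  assumes "b 0 = 0"
  shows "sqnormB r b = (\<Sum>k\<in>{1..r}. (b k - b (k - 1))\<^sup>2)"
proof -
  define e where "e k = b k - b (k - 1)" for k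
  have "sqnormB r b = (\<Sum>i\<in>{1..r}. b i * e i - (if i < r then b i * e (Suc i) else 0))"
    unfolding sqnormB_eq_sum_row using assms
    by (intro sum.cong refl) (auto simp: e_def algebra_simps not_le le_Suc_eq)
  also have "\<dots> = (\<Sum>k\<in>{1..r}. b k * e k) - (\<Sum>i\<in>{1..<r}. b i * e (Suc i))"
  proof -
    have "{i \<in> {1..r}. i < r} = {1..<r}" by auto
    then show ?thesis by (simp add: sum_subtractf sum.inter_filter[symmetric])
  qed
  also have "(\<Sum>i\<in>{1..<r}. b i * e (Suc i)) = (\<Sum>k\<in>{1..r}. b (k - 1) * e k)"
  proof (cases r)
    case (Suc m)
    have "(\<Sum>k\<in>{1..r}. b (k - 1) * e k) = (\<Sum>i\<in>{0..m}. b i * e (Suc i))"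
      using sum.shift_bounds_cl_Suc_ivl[of "\<lambda>k. b (k - 1) * e k" 0 m] Suc by simp
    also have "\<dots> = (\<Sum>i\<in>{1..m}. b i * e (Suc i))"
      using assms by (simp add: sum.atLeast_Suc_atMost)
    finally show ?thesis using Suc by (simp add: atLeastLessThanSuc_atLeastAtMost)
  qed simp
  finally show ?thesis
    by (simp add: sum_subtractf[symmetric] e_def power2_eq_square algebra_simps)
qed

lemma sqnormB_segment:
  assumes "(i, j) \<in> index_pairs r"
  shows "sqnormB r (segment i j) = 2"
proof -
  have b0: "segment i j 0 = 0" using assms by (simp add: index_pairs_def segment_def)
  have "sqnormB r (segment i j) = (\<Sum>k\<in>{1..r}. (if k = i then 1 else 0) + (if k = j then 1 else 0))"
    unfolding sqnormB_eq_sum_diff_squares[of "segment i j", OF b0]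
    using assms by (intro sum.cong refl) (auto simp: index_pairs_def segment_def)
  also have "\<dots> = 2" using assms by (auto simp: index_pairs_def sum.distrib)
  finally show ?thesis .
qed

lemma sqnormB_rootIII:
  assumes "(i, j) \<in> index_pairs r"
  shows "sqnormB r (rootIII r i j) = 2"
proof -
  have b0: "rootIII r i j 0 = 0" using assms by (simp add: index_pairs_def rootIII_def segment_def)
  have "sqnormB r (rootIII r i j)
      = (\<Sum>k\<in>{1..r}. (if k = i then 1 else 0) + (if k = j then 1 else 0))"
    unfolding sqnormB_eq_sum_diff_squares[of "rootIII r i j", OF b0]
    using assms by (intro sum.cong refl) (auto simp: index_pairs_def rootIII_def segment_def)
  also have "\<dots> = 2" using assms by (auto simp: index_pairs_def sum.distrib)
  finally show ?thesis .
qed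

lemma sqnormB_rootI:
  assumes "i \<in> {1..r}"
  shows "sqnormB r (rootI r i) = 1"
proof -
  have b0: "rootI r i 0 = 0" using assms by (simp add: rootI_def segment_def)
  have "sqnormB r (rootI r i) = (\<Sum>k\<in>{1..r}. if k = i then 1 else 0)"
    unfolding sqnormB_eq_sum_diff_squares[of "rootI r i", OF b0]
    using assms by (intro sum.cong refl) (auto simp: rootI_def segment_def)
  also have "\<dots> = 1" using assms by simp
  finally show ?thesis .
qed

lemma coroot_coeff_segment: "(i, j) \<in> index_pairs r \<Longrightarrow> coroot_coeff r (segment i j) = segment i j"
  by (auto simp: fun_eq_iff coroot_coeff_def sqnormB_segment ipB_def segment_def index_pairs_def)

lemma coroot_coeff_rootIII: "(i, j) \<in> index_pairs r \<Longrightarrow> coroot_coeff r (rootIII r i j) = corootII r i j"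
  by (auto simp: fun_eq_iff coroot_coeff_def sqnormB_rootIII ipB_def corootII_def rootIII_def
      segment_def index_pairs_def)

lemma coroot_coeff_rootI: "i \<in> {1..r} \<Longrightarrow> coroot_coeff r (rootI r i) = corootIII r i"
  by (auto simp: fun_eq_iff coroot_coeff_def sqnormB_rootI ipB_def corootIII_def rootI_def segment_def)

section \<open>Values of \<open>f\<^sub>X\<close> and \<open>f\<^sub>Y\<close> on the three families\<close>

context type_B_cover
begin

lemma tnQ_cvec_short_coroot_row:
  assumes "1 \<le> w" "w < r"
    and "2 * d w - (if w \<ge> 2 then d (w - 1) else 0) - (if w + 1 = r then 2 else 1) * d (w + 1) \<in> {1, -1}"
  shows "tnQ Q n (cvec r c d) = n_long"
  using assms cartanB_row_sum[of w r d] pair_cvec[of w d] by (intro tnQ_cvec_short_coroot[of w]) auto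

lemma tnQ_cvec_long_coroot_row:
  assumes "\<forall>k\<in>{1..<r}. even (d k)" and "1 \<le> w" "w < r"
    and "2 * d w - (if w \<ge> 2 then d (w - 1) else 0) - (if w + 1 = r then 2 else 1) * d (w + 1) \<in> {2, -2}"
  shows "tnQ Q n (cvec r c d) = n_short"
  using assms cartanB_row_sum[of w r d] pair_cvec[of w d] by (intro tnQ_cvec_long_coroot[of d w]) auto

lemma tnQ_segment:
  assumes "(i, j) \<in> index_pairs r"
  shows "tnQ Q n (cvec r c (segment i j)) = n_long"
proof -
  have ij: "1 \<le> i" "i < j" "j \<le> r" using assms by (auto simp: index_pairs_def)
  consider "i \<ge> 2" | "i = 1" "j < r" | "i = 1" "j = r" using ij by linarith
  then show ?thesis
  proof cases
    case 1
    then obtain w where "i = Suc w" "w \<ge> 1" by (cases i) auto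
    then show ?thesis using ij by (intro tnQ_cvec_short_coroot_row[of w]) (auto simp: segment_def)
  next
    case 2
    then show ?thesis using ij by (intro tnQ_cvec_short_coroot_row[of j]) (auto simp: segment_def)
  next
    case 3
    then show ?thesis using ij r3 by (intro tnQ_cvec_short_coroot_row[of "r - 1"]) (auto simp: segment_def)
  qed
qed

lemma tnQ_corootII:
  assumes "(i, j) \<in> index_pairs r"
  shows "tnQ Q n (cvec r c (corootII r i j)) = n_long"
proof -
  have ij: "1 \<le> i" "i < j" "j \<le> r" using assms by (auto simp: index_pairs_def)
  consider "i \<ge> 2" | "i = 1" "j \<ge> 3" | "i = 1" "j = 2" using ij by linarith
  then show ?thesis
  proof cases
    case 1
    then obtain w where "i = Suc w" "w \<ge> 1" by (cases i) auto
    then show ?thesis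
      using ij by (intro tnQ_cvec_short_coroot_row[of w]) (auto simp: corootII_def segment_def)
  next
    case 2
    then show ?thesis
      using ij by (intro tnQ_cvec_short_coroot_row[of "j - 1"]) (auto simp: corootII_def segment_def)
  next
    case 3
    then show ?thesis
      using r3 by (intro tnQ_cvec_short_coroot_row[of 2]) (auto simp: corootII_def segment_def)
  qed
qed

lemma tnQ_corootIII:
  assumes "i \<in> {1..r}"
  shows "tnQ Q n (cvec r c (corootIII r i)) = n_short"
proof -
  have even: "\<forall>k\<in>{1..<r}. even (corootIII r i k)" by (simp add: corootIII_def segment_def)
  consider "i \<ge> 2" | "i = 1" using assms by (cases "i \<ge> 2") auto
  then show ?thesis
  proof cases
    case 1
    then obtain w where "i = Suc w" "w \<ge> 1" by (cases i) auto
    then show ?thesis using assms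
      by (intro tnQ_cvec_long_coroot_row[OF even, of w]) (auto simp: corootIII_def segment_def)
  next
    case 2
    then show ?thesis using r3
      by (intro tnQ_cvec_long_coroot_row[OF even, of 1]) (auto simp: corootIII_def segment_def)
  qed
qed

lemma fX_segment:
  assumes "(i, j) \<in> index_pairs r"
  shows "fX r c Q n (segment i j) = of_int (int j - int i) / of_int n_long"
proof -
  have ij: "1 \<le> i" "i < j" "j \<le> r" using assms by (auto simp: index_pairs_def)
  then have "(\<Sum>k\<in>{1..<r}. segment i j k) = int j - int i"
    by (simp add: sum_segment min_absorb1 max_absorb1 of_nat_diff)
  moreover have "segment i j r = 0" using ij by (simp add: segment_def)
  ultimately show ?thesis by (simp add: fX_eq)
qed

lemma fX_corootII:
  assumes "(i, j) \<in> index_pairs r"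
  shows "fX r c Q n (corootII r i j)
    = of_int (2 * int r - (int i + int j)) / of_int n_long + 1 / of_int n_short"
proof -
  have ij: "1 \<le> i" "i < j" "j \<le> r" using assms by (auto simp: index_pairs_def)
  then have "(\<Sum>k\<in>{1..<r}. corootII r i j k) = 2 * int r - (int i + int j)"
    by (simp add: corootII_def sum.distrib sum_distrib_left[symmetric] sum_segment
        min_absorb1 min_absorb2 max_absorb1 of_nat_diff algebra_simps)
  moreover have "corootII r i j r = 1" using ij by (simp add: corootII_def segment_def)
  ultimately show ?thesis by (simp add: fX_eq)
qed

lemma fX_corootIII:
  assumes "i \<in> {1..r}"
  shows "fX r c Q n (corootIII r i) = of_int (2 * (int r - int i)) / of_int n_long + 1 / of_int n_short"
proof -
  have "(\<Sum>k\<in>{1..<r}. corootIII r i k) = 2 * (int r - int i)"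
    using assms by (simp add: corootIII_def sum.distrib sum_distrib_left[symmetric] sum_segment
        min_absorb1 min_absorb2 max_absorb1 of_nat_diff)
  moreover have "corootIII r i r = 1" by (simp add: corootIII_def segment_def)
  ultimately show ?thesis by (simp add: fX_eq)
qed

lemma fY_segment:
  assumes "(i, j) \<in> index_pairs r"
  shows "fY r c Q n (segment i j) = of_int (int j - int i) / of_int n_long"
proof -
  have ij: "1 \<le> i" "i < j" "j \<le> r" using assms by (auto simp: index_pairs_def)
  then have "(\<Sum>k\<in>{1..r}. segment i j k) = int j - int i"
    by (simp add: sum_segment_atLeastAtMost min_absorb1 max_absorb1 of_nat_diff)
  then show ?thesis using assms by (simp add: fY_def coroot_coeff_segment tnQ_segment)
qed

lemma fY_rootIII:
  assumes "(i, j) \<in> index_pairs r"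
  shows "fY r c Q n (rootIII r i j) = of_int (2 * int r + 2 - (int i + int j)) / of_int n_long"
proof -
  have ij: "1 \<le> i" "i < j" "j \<le> r" using assms by (auto simp: index_pairs_def)
  then have "(\<Sum>k\<in>{1..r}. rootIII r i j k) = 2 * int r + 2 - (int i + int j)"
    by (simp add: rootIII_def sum.distrib sum_distrib_left[symmetric] sum_segment_atLeastAtMost
        min_absorb1 max_absorb1 of_nat_diff algebra_simps)
  then show ?thesis using assms by (simp add: fY_def coroot_coeff_rootIII tnQ_corootII)
qed

lemma fY_rootI:
  assumes "i \<in> {1..r}"
  shows "fY r c Q n (rootI r i) = of_int (int r + 1 - int i) / of_int n_short"
proof -
  have "(\<Sum>k\<in>{1..r}. rootI r i k) = int r + 1 - int i"
    using assms by (simp add: rootI_def sum_segment_atLeastAtMost max_absorb1 of_nat_diff)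
  then show ?thesis using assms by (simp add: fY_def coroot_coeff_rootI tnQ_corootIII)
qed

lemma fX_image_PhivI: "fX r c Q n ` PhivI r = (\<lambda>s. of_int s / of_int n_long) ` {1..int r - 1}"
  unfolding PhivI_eq image_index_pairs_diff[symmetric] image_image
  by (rule image_cong) (auto simp: fX_segment split: prod.splits)

lemma fY_image_PhiII: "fY r c Q n ` PhiII r = (\<lambda>s. of_int s / of_int n_long) ` {1..int r - 1}"
  unfolding PhiII_eq image_index_pairs_diff[symmetric] image_image
  by (rule image_cong) (auto simp: fY_segment split: prod.splits)

lemma fX_image_PhivII:
  "fX r c Q n ` PhivII r
    = (\<lambda>s. of_int (2 * int r - s) / of_int n_long + 1 / of_int n_short) ` {3..2 * int r - 1}"
  unfolding PhivII_eq image_index_pairs_sum[symmetric] image_image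
  by (rule image_cong) (auto simp: fX_corootII split: prod.splits)

lemma fY_image_PhiIII:
  "fY r c Q n ` PhiIII r = (\<lambda>s. of_int (2 * int r + 2 - s) / of_int n_long) ` {3..2 * int r - 1}"
  unfolding PhiIII_eq image_index_pairs_sum[symmetric] image_image
  by (rule image_cong) (auto simp: fY_rootIII split: prod.splits)

lemma fX_image_PhivIII:
  "fX r c Q n ` PhivIII r
    = (\<lambda>i. of_int (2 * (int r - int i)) / of_int n_long + 1 / of_int n_short) ` {1..r}"
  unfolding PhivIII_eq image_image by (rule image_cong) (auto simp: fX_corootIII)

lemma fY_image_PhiI: "fY r c Q n ` PhiI r = (\<lambda>i. of_int (int r + 1 - int i) / of_int n_short) ` {1..r}"
  unfolding PhiI_eq image_image by (rule image_cong) (auto simp: fY_rootI)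

lemma images_match_if_n_long_eq_twice_n_short:
  assumes long_short: "n_long = 2 * n_short"
  shows "fX r c Q n ` PhivI r = fY r c Q n ` PhiII r"
    and "fX r c Q n ` PhivII r = fY r c Q n ` PhiIII r"
    and "fX r c Q n ` PhivIII r = fY r c Q n ` PhiI r"
proof -
  have S: "of_int n_short \<noteq> (0 :: rat)" using n_short_pos by simp
  show "fX r c Q n ` PhivI r = fY r c Q n ` PhiII r"
    by (simp only: fX_image_PhivI fY_image_PhiII)
  show "fX r c Q n ` PhivII r = fY r c Q n ` PhiIII r"
    unfolding fX_image_PhivII fY_image_PhiIII long_short using S
    by (intro image_cong refl) (simp add: field_simps)
  show "fX r c Q n ` PhivIII r = fY r c Q n ` PhiI r"
    unfolding fX_image_PhivIII fY_image_PhiI long_short using S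
    by (intro image_cong refl) (simp add: field_simps)
qed

lemma fY_image_PhiPos_if_n_long_eq_twice_n_short:
  assumes long_short: "n_long = 2 * n_short"
  shows "fY r c Q n ` PhiPos r = (\<lambda>k. of_int k / of_int (2 * n_short)) ` {1..2 * int r}"
proof -
  let ?h = "\<lambda>k. of_int k / of_int (2 * n_short) :: rat"
  let ?E = "(\<lambda>i. 2 * (int r + 1 - int i)) ` {1..r}"
  have S: "of_int n_short \<noteq> (0 :: rat)" using n_short_pos by simp
  have I: "fY r c Q n ` PhiI r = ?h ` ?E"
    unfolding fY_image_PhiI image_image using S by (intro image_cong refl) (simp add: field_simps)
  have II: "fY r c Q n ` PhiII r = ?h ` {1..int r - 1}"
    unfolding fY_image_PhiII long_short ..
  have "fY r c Q n ` PhiIII r = ?h ` ((-) (2 * int r + 2) ` {3..2 * int r - 1})"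
    unfolding fY_image_PhiIII long_short image_image ..
  then have III: "fY r c Q n ` PhiIII r = ?h ` {3..2 * int r - 1}" by simp
  have "{1..int r - 1} \<union> {3..2 * int r - 1} = {1..2 * int r - 1}" using r3 by auto
  moreover have "?E \<subseteq> {1..2 * int r}" by auto
  moreover have "2 * int r \<in> ?E" using r3 by (intro image_eqI[of _ _ 1]) auto
  ultimately have "?E \<union> {1..int r - 1} \<union> {3..2 * int r - 1} = {1..2 * int r}"
    using Un_atLeastAtMost_int_top[of ?E 1 "2 * int r"] by (simp add: Un_assoc)
  then show ?thesis unfolding PhiPos_def image_Un I II III by (simp only: image_Un[symmetric])
qed

lemma fX_image_PhivPos_if_n_short_eq_n_long:
  assumes short_long: "n_short = n_long"
  shows "fX r c Q n ` PhivPos r = (\<lambda>k. of_int k / of_int n_long) ` {1..2 * int r - 1}"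
proof -
  let ?h = "\<lambda>k. of_int k / of_int n_long :: rat"
  let ?O = "(\<lambda>i. 2 * (int r - int i) + 1) ` {1..r}"
  have L: "of_int n_long \<noteq> (0 :: rat)" using n_long_pos by simp
  have "fX r c Q n ` PhivII r = ?h ` ((-) (2 * int r + 1) ` {3..2 * int r - 1})"
    unfolding fX_image_PhivII short_long image_image using L
    by (intro image_cong refl) (simp add: field_simps)
  then have II: "fX r c Q n ` PhivII r = ?h ` {2..2 * int r - 2}" by simp
  have III: "fX r c Q n ` PhivIII r = ?h ` ?O"
    unfolding fX_image_PhivIII short_long image_image using L
    by (intro image_cong refl) (simp add: field_simps)
  have "{1..int r - 1} \<union> {2..2 * int r - 2} = {1..2 * int r - 1 - 1}" using r3 by auto
  moreover have "?O \<subseteq> {1..2 * int r - 1}" by auto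
  moreover have "2 * int r - 1 \<in> ?O" using r3 by (intro image_eqI[of _ _ 1]) auto
  ultimately have "{1..int r - 1} \<union> {2..2 * int r - 2} \<union> ?O = {1..2 * int r - 1}"
    using Un_atLeastAtMost_int_top[of ?O 1 "2 * int r - 1"] by (simp add: Un_ac)
  then show ?thesis
    unfolding PhivPos_def image_Un fX_image_PhivI II III by (simp only: image_Un[symmetric])
qed

lemma fY_image_PhiPos_if_n_short_eq_n_long:
  assumes short_long: "n_short = n_long"
  shows "fY r c Q n ` PhiPos r = (\<lambda>k. of_int k / of_int n_long) ` {1..2 * int r - 1}"
proof -
  let ?h = "\<lambda>k. of_int k / of_int n_long :: rat"
  let ?T = "(\<lambda>i. int r + 1 - int i) ` {1..r}"
  have I: "fY r c Q n ` PhiI r = ?h ` ?T"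
    unfolding fY_image_PhiI short_long image_image ..
  have "fY r c Q n ` PhiIII r = ?h ` ((-) (2 * int r + 2) ` {3..2 * int r - 1})"
    unfolding fY_image_PhiIII image_image ..
  then have III: "fY r c Q n ` PhiIII r = ?h ` {3..2 * int r - 1}" by simp
  have "{1..int r - 1} \<union> {3..2 * int r - 1} = {1..2 * int r - 1}" using r3 by auto
  moreover have "?T \<subseteq> {1..2 * int r - 1}" by auto
  ultimately have "?T \<union> {1..int r - 1} \<union> {3..2 * int r - 1} = {1..2 * int r - 1}"
    by (simp add: Un_assoc Un_absorb1)
  then show ?thesis
    unfolding PhiPos_def image_Un I fY_image_PhiII III by (simp only: image_Un[symmetric])
qed

lemma images_if_n_long_eq_twice_n_short:
  assumes "n_long = 2 * n_short"
  shows "fX r c Q n ` PhivI r = fY r c Q n ` PhiII r \<and>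
    fX r c Q n ` PhivII r = fY r c Q n ` PhiIII r \<and>
    fX r c Q n ` PhivIII r = fY r c Q n ` PhiI r \<and>
    fX r c Q n ` PhivPos r = (\<lambda>k. of_int k / of_int (2 * n_short)) ` {1..2 * int r} \<and>
    fY r c Q n ` PhiPos r = (\<lambda>k. of_int k / of_int (2 * n_short)) ` {1..2 * int r}"
proof -
  note match = images_match_if_n_long_eq_twice_n_short[OF assms]
  have "fX r c Q n ` PhivPos r = fY r c Q n ` PhiPos r"
    unfolding PhivPos_def PhiPos_def image_Un match by (simp only: Un_ac)
  then show ?thesis using match fY_image_PhiPos_if_n_long_eq_twice_n_short[OF assms] by simp
qed

lemma images_if_n_short_eq_n_long:
  assumes "n_short = n_long"
  shows "fX r c Q n ` PhivPos r = (\<lambda>k. of_int k / of_int n_long) ` {1..2 * int r - 1} \<and>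
    fY r c Q n ` PhiPos r = (\<lambda>k. of_int k / of_int n_long) ` {1..2 * int r - 1}"
  using fX_image_PhivPos_if_n_short_eq_n_long[OF assms] fY_image_PhiPos_if_n_short_eq_n_long[OF assms]
  by simp

end

theorem lemma3p2:
  fixes r :: nat and n :: int
    and a c :: "nat \<Rightarrow> int^'m"
    and Q :: "int^'m \<Rightarrow> int"
  assumes r3: "r \<ge> 3"
    and npos: "n \<ge> 1"
    and cartan: "\<forall>i\<in>{1..r}. \<forall>j\<in>{1..r}. pair (a i) (c j) = cartanB r i j"
    and quad: "is_quadratic_form Q"
    and winv: "\<forall>i\<in>{1..r}. \<forall>y. Q (srefl a c i y) = Q y"
  shows
    "((\<forall>i\<in>{1..<r}. nQ Q n (c i) = 2 * nQ Q n (c r)) \<longrightarrow>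
        fX r c Q n ` PhivI r = fY r c Q n ` PhiII r \<and>
        fX r c Q n ` PhivII r = fY r c Q n ` PhiIII r \<and>
        fX r c Q n ` PhivIII r = fY r c Q n ` PhiI r \<and>
        fX r c Q n ` PhivPos r = (\<lambda>k. of_int k / of_int (2 * nQ Q n (c r))) ` {1..2 * int r} \<and>
        fY r c Q n ` PhiPos r = (\<lambda>k. of_int k / of_int (2 * nQ Q n (c r))) ` {1..2 * int r})
     \<and>
     ((\<forall>i\<in>{1..r}. nQ Q n (c i) = nQ Q n (c 1)) \<longrightarrow>
        fX r c Q n ` PhivPos r = (\<lambda>k. of_int k / of_int (nQ Q n (c 1))) ` {1..2 * int r - 1} \<and>
        fY r c Q n ` PhiPos r = (\<lambda>k. of_int k / of_int (nQ Q n (c 1))) ` {1..2 * int r - 1})"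
proof -
  interpret type_B_cover r n a c Q by (rule type_B_cover.intro) (fact assms)+
  have long: "n_long = 2 * n_short" if "\<forall>i\<in>{1..<r}. nQ Q n (c i) = 2 * n_short"
    using that[rule_format, of 1] r3 by simp
  have equal: "n_short = n_long" if "\<forall>i\<in>{1..r}. nQ Q n (c i) = n_long"
    using that[rule_format, of r] r3 by simp
  show ?thesis
    by (intro conjI[OF impI impI] images_if_n_long_eq_twice_n_short[OF long]
        images_if_n_short_eq_n_long[OF equal])
qed

end
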